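(* Let $p$ be an odd prime, let $m,k$ be integers with $0<k\le\lfloor m/2\rfloor$ and $m/\gcd(m,k)$ odd, and put $l=\gcd(m,k)$. Let $\alpha\in\mathbb{F}_{p^l}$ be a non-square in $\mathbb{F}_{p^m}$, and let $\sigma(x)=x^{p^s}$ with $0\le s\le\lfloor m/2\rfloor$. With $x\circ_k y=x^{p^k}y+y^{p^k}x$, define on $\mathbb{F}_{p^m}^2$ the multiplication $(a,b)*(c,d)=(a\circ_k c+\alpha\,\sigma(b\circ_k d),\ ad+bc)$, let $L(a,b)=(a+a^{p^k},b)$, and let $\mathbb{S}_{k,\sigma}=(\mathbb{F}_{p^m}^2,+,\star)$ be the semifield with $L(x)\star L(y)=x*y$. Then the nucleus $N(\mathbb{S}_{k,\sigma})$ (which equals its left and its right nucleus) is isomorphic to $\mathbb{F}_{p^t}$, where $t=\gcd(m,k,s)$ (with $\gcd(m,k,0)=\gcd(m,k)$).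
   Context: For a semifield $(\mathbb{S},+,\star)$: left nucleus $N_l=\{a:(a\star x)\star y=a\star(x\star y)\ \forall x,y\}$, middle nucleus $N_m=\{a:(x\star a)\star y=x\star(a\star y)\ \forall x,y\}$, right nucleus $N_r=\{a:(x\star y)\star a=x\star(y\star a)\ \forall x,y\}$, and nucleus $N=N_l\cap N_m\cap N_r$. These are finite fields; for commutative $\mathbb{S}$, $N_l=N_r=N$. *)

theory Defs
  imports Main "HOL-Computational_Algebra.Primes"
begin

text \<open>The finite field F_{p^m} is modelled by a finite field type 'a with CARD('a) = p^m.
  Elements of the semifield are pairs in 'a \<times> 'a with componentwise addition.\<close>

definition circ :: "nat \<Rightarrow> nat \<Rightarrow> 'a::field \<Rightarrow> 'a \<Rightarrow> 'a" where
  "circ p k x y = x ^ (p ^ k) * y + y ^ (p ^ k) * x"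

definition pre_mult :: "nat \<Rightarrow> nat \<Rightarrow> nat \<Rightarrow> 'a::field \<Rightarrow> 'a \<times> 'a \<Rightarrow> 'a \<times> 'a \<Rightarrow> 'a \<times> 'a" where
  "pre_mult p k s \<alpha> u v =
     (circ p k (fst u) (fst v) + \<alpha> * (circ p k (snd u) (snd v)) ^ (p ^ s),
      fst u * snd v + snd u * fst v)"

definition Lmap :: "nat \<Rightarrow> nat \<Rightarrow> 'a::field \<times> 'a \<Rightarrow> 'a \<times> 'a" where
  "Lmap p k u = (fst u + fst u ^ (p ^ k), snd u)"

definition star :: "nat \<Rightarrow> nat \<Rightarrow> nat \<Rightarrow> 'a::field \<Rightarrow> 'a \<times> 'a \<Rightarrow> 'a \<times> 'a \<Rightarrow> 'a \<times> 'a" where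
  "star p k s \<alpha> u v = pre_mult p k s \<alpha> (inv (Lmap p k) u) (inv (Lmap p k) v)"

definition pair_add :: "'a::field \<times> 'a \<Rightarrow> 'a \<times> 'a \<Rightarrow> 'a \<times> 'a" where
  "pair_add u v = (fst u + fst v, snd u + snd v)"

definition left_nucleus :: "('b \<Rightarrow> 'b \<Rightarrow> 'b) \<Rightarrow> 'b set" where
  "left_nucleus m = {a. \<forall>x y. m (m a x) y = m a (m x y)}"

definition middle_nucleus :: "('b \<Rightarrow> 'b \<Rightarrow> 'b) \<Rightarrow> 'b set" where
  "middle_nucleus m = {a. \<forall>x y. m (m x a) y = m x (m a y)}"

definition right_nucleus :: "('b \<Rightarrow> 'b \<Rightarrow> 'b) \<Rightarrow> 'b set" where
  "right_nucleus m = {a. \<forall>x y. m (m x y) a = m x (m y a)}"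

definition nucleus :: "('b \<Rightarrow> 'b \<Rightarrow> 'b) \<Rightarrow> 'b set" where
  "nucleus m = left_nucleus m \<inter> middle_nucleus m \<inter> right_nucleus m"

end

theory Submission
  imports Defs "HOL-Number_Theory.Residues" "HOL-Computational_Algebra.Polynomial"
begin

text \<open>
  Let \<open>q = p^k\<close> and let \<open>K\<close> be the subfield of elements fixed by \<open>x \<mapsto> x^q\<close> and by
  \<open>x \<mapsto> x^(p^s)\<close>; inside \<open>\<bbbF>_(p^m)\<close> this is the fixed field of \<open>x \<mapsto> x^(p^gcd(m,k,s))\<close>.
  Both \<open>L\<close> and the pre-multiplication \<open>*\<close> are \<open>K\<close>-linear, and \<open>(c, 0) * v = L(c v)\<close> for
  \<open>c \<in> K\<close>; so \<open>\<star>\<close>-multiplication by \<open>L(c, 0) = (2c, 0)\<close> is scalar multiplication by \<open>c\<close>,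
  which puts these elements into the nucleus. Conversely, if \<open>a\<close> is in the left nucleus and
  \<open>L\<^sup>-\<^sup>1(a) = (a\<^sub>1, a\<^sub>2)\<close>, associativity tested on the pre-images \<open>(z, 0)\<close> and \<open>(0, 1)\<close>, with
  \<open>z^q \<noteq> z\<close>, forces \<open>a\<^sub>1^q = a\<^sub>1\<close>, \<open>a\<^sub>2 = 0\<close> and \<open>a\<^sub>1^(p^s) = a\<^sub>1\<close>. The right nucleus equals the
  left one because \<open>\<star>\<close> is commutative.

  That \<open>L\<close> is invertible is where the oddness of \<open>m / gcd(m, k)\<close> enters: \<open>x^q = -x\<close> implies
  \<open>x^(q^2) = x\<close>, so \<open>x\<close> is fixed by the \<open>p^gcd(2k, m)\<close>-th power, and \<open>gcd(2k, m) = gcd(k, m)\<close>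
  divides \<open>k\<close>; hence \<open>x = -x\<close>, i.e. \<open>x = 0\<close>.
\<close>

lemma power_power_fixed_mult:
  fixes x :: "'a::monoid_mult"
  assumes "x ^ (p ^ i) = x"
  shows "x ^ (p ^ (i * j)) = x"
proof (induction j)
  case (Suc j)
  have "x ^ (p ^ (i * Suc j)) = (x ^ (p ^ i)) ^ (p ^ (i * j))"
    by (simp add: power_add power_mult)
  with assms Suc show ?case
    by simp
qed simp

lemma power_power_fixed_dvd:
  fixes x :: "'a::monoid_mult"
  assumes "x ^ (p ^ i) = x" and "i dvd j"
  shows "x ^ (p ^ j) = x"
  using assms power_power_fixed_mult by (metis dvdE)

lemma power_power_fixed_gcd:
  fixes x :: "'a::monoid_mult"
  assumes fixed_i: "x ^ (p ^ i) = x" and fixed_j: "x ^ (p ^ j) = x"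
  shows "x ^ (p ^ gcd i j) = x"
proof (cases "i = 0")
  case False
  then obtain u v where bezout: "i * u = j * v + gcd i j"
    using bezout_nat by blast
  have "x = x ^ (p ^ (i * u))"
    using power_power_fixed_mult[OF fixed_i] by simp
  also have "\<dots> = (x ^ (p ^ (j * v))) ^ (p ^ gcd i j)"
    by (simp add: bezout power_add power_mult)
  also have "\<dots> = x ^ (p ^ gcd i j)"
    using power_power_fixed_mult[OF fixed_j] by simp
  finally show ?thesis
    by simp
qed (use fixed_j in simp)

lemma power_power_fixed_both_iff_gcd:
  fixes x :: "'a::monoid_mult"
  assumes "x ^ (p ^ m) = x"
  shows "x ^ (p ^ k) = x \<and> x ^ (p ^ s) = x \<longleftrightarrow> x ^ (p ^ gcd (gcd m k) s) = x"
  using assms power_power_fixed_gcd power_power_fixed_dvd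
  by (metis dvd_trans gcd_dvd1 gcd_dvd2)

lemma gcd_double_eq_gcd:
  fixes m k :: nat
  assumes "odd (m div gcd m k)"
  shows "gcd (2 * k) m = gcd m k"
proof (cases "gcd m k = 0")
  case False
  obtain m' k' where m: "m = gcd m k * m'" and k: "k = gcd m k * k'"
    by (metis gcd_dvd1 gcd_dvd2 dvdE)
  have "gcd m k * gcd m' k' = gcd m k * 1"
    by (metis m k gcd_mult_distrib_nat mult_1_right)
  then have "gcd k' m' = 1"
    using False by (auto simp: gcd.commute)
  moreover have "odd m'"
    using assms False by (subst (asm) m) (auto split: if_splits)
  ultimately have "gcd (2 * k') m' = 1"
    by (simp add: gcd_mult_left_left_cancel)
  then show ?thesis
    by (metis m k gcd_mult_distrib_nat mult.left_commute mult_1_right)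
qed simp

text \<open>
  The library's \<open>finite_field_power_card_eq_same\<close> is stated for the sort \<open>finite_field\<close>; the
  theorem is about the sort \<open>{field, finite}\<close>, so Fermat's little theorem is re-derived here.
\<close>
lemma power_card_eq_self:
  fixes x :: "'a::{field,finite}"
  shows "x ^ card (UNIV :: 'a set) = x"
proof (cases "x = 0")
  case False
  let ?U = "UNIV - {0::'a}"
  have "(\<Prod>y\<in>?U. x * y) = (\<Prod>y\<in>?U. y)"
    by (rule prod.reindex_bij_witness[of _ "\<lambda>y. y / x" "\<lambda>y. x * y"]) (use False in auto)
  then have "x ^ (card (UNIV :: 'a set) - 1) * \<Prod>?U = \<Prod>?U"
    by (simp add: prod.distrib card_Diff_singleton)
  moreover have "\<Prod>?U \<noteq> 0"
    by simp
  ultimately have "x ^ (card (UNIV :: 'a set) - 1) = 1"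
    by simp
  moreover have "card (UNIV :: 'a set) = Suc (card (UNIV :: 'a set) - 1)"
    using finite_UNIV_card_ge_0[where 'a = 'a] by simp
  ultimately show ?thesis
    by (metis power_Suc mult_1_right)
qed (simp add: finite_UNIV_card_ge_0)

lemma CHAR_eq_of_card_eq_prime_power:
  assumes "prime p" and "card (UNIV :: 'a::{field,finite} set) = p ^ m"
  shows "CHAR('a) = p"
proof -
  have "prime CHAR('a)"
    using finite_imp_CHAR_pos[where 'a = 'a] by (simp add: prime_CHAR_semidom)
  moreover have "CHAR('a) dvd p ^ m"
    using CHAR_dvd_CARD[where 'a = 'a] assms(2) by simp
  ultimately show ?thesis
    using assms(1) by (metis prime_dvd_power primes_dvd_imp_eq)
qed

lemma exists_power_neq_self:
  assumes "1 < n" and "n < card (UNIV :: 'a::{field,finite} set)"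
  shows "\<exists>z::'a. z ^ n \<noteq> z"
proof (rule ccontr)
  assume all_fixed: "\<not> ?thesis"
  define P :: "'a poly" where "P = monom 1 n - [:0, 1:]"
  have "coeff P n = 1"
    using assms(1) by (simp add: P_def coeff_pCons split: nat.split)
  then have "P \<noteq> 0"
    by auto
  then have "card {x. poly P x = 0} \<le> degree P"
    by (rule card_poly_roots_bound)
  moreover have "{x. poly P x = 0} = UNIV"
    using all_fixed by (auto simp: P_def poly_monom)
  moreover have "degree P \<le> n"
    using degree_diff_le_max[of "monom (1::'a) n" "[:0, 1:]"] assms(1)
    by (simp add: P_def degree_monom_eq)
  ultimately show False
    using assms(2) by simp
qed

lemma right_nucleus_eq_left_nucleus:
  assumes "\<And>x y. f x y = f y x"
  shows "right_nucleus f = left_nucleus f"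
proof -
  have "f (f x y) a = f a (f y x)" and "f x (f y a) = f (f a y) x" for a x y
    using assms by metis+
  then show ?thesis
    unfolding right_nucleus_def left_nucleus_def by (metis (no_types, lifting))
qed

lemma circ_commute: "circ p k x y = circ p k y x"
  by (simp add: circ_def add.commute)

lemma pre_mult_commute: "pre_mult p k s \<alpha> u v = pre_mult p k s \<alpha> v u"
  unfolding pre_mult_def
  by (simp add: circ_commute[of p k "fst u"] circ_commute[of p k "snd u"] add.commute mult.commute)

definition scale_pair :: "'a::times \<Rightarrow> 'a \<times> 'a \<Rightarrow> 'a \<times> 'a" where
  "scale_pair c u = (c * fst u, c * snd u)"

lemma Lmap_scale_pair:
  fixes c :: "'a::field"
  assumes "c ^ (p ^ k) = c"
  shows "Lmap p k (scale_pair c u) = scale_pair c (Lmap p k u)"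
  using assms by (simp add: Lmap_def scale_pair_def power_mult_distrib algebra_simps)

lemma circ_scale_left:
  fixes c :: "'a::field"
  assumes "c ^ (p ^ k) = c"
  shows "circ p k (c * x) y = c * circ p k x y"
  using assms by (simp add: circ_def power_mult_distrib algebra_simps)

lemma pre_mult_scale_pair_left:
  fixes c :: "'a::field"
  assumes "c ^ (p ^ k) = c" and "c ^ (p ^ s) = c"
  shows "pre_mult p k s \<alpha> (scale_pair c u) v = scale_pair c (pre_mult p k s \<alpha> u v)"
  using assms
  by (simp add: pre_mult_def scale_pair_def circ_scale_left power_mult_distrib algebra_simps)

lemma pre_mult_scalar_left:
  fixes c :: "'a::field"
  assumes "c ^ (p ^ k) = c" and "0 < p"
  shows "pre_mult p k s \<alpha> (c, 0) v = Lmap p k (scale_pair c v)"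
  using assms
  by (simp add: pre_mult_def Lmap_def circ_def scale_pair_def power_mult_distrib algebra_simps)

locale pair_semifield =
  fixes p m k s :: nat and \<alpha> :: "'a::{field,finite}"
  assumes prime_p: "prime p" and odd_p: "odd p"
    and card_field: "card (UNIV :: 'a set) = p ^ m"
    and k_pos: "0 < k" and k_less: "k < m"
    and odd_m_div_gcd: "odd (m div gcd m k)"
    and alpha_nonzero: "\<alpha> \<noteq> 0"
begin

abbreviation L :: "'a \<times> 'a \<Rightarrow> 'a \<times> 'a" where
  "L \<equiv> Lmap p k"

abbreviation L_inv :: "'a \<times> 'a \<Rightarrow> 'a \<times> 'a" where
  "L_inv \<equiv> inv_into UNIV L"

abbreviation pmul :: "'a \<times> 'a \<Rightarrow> 'a \<times> 'a \<Rightarrow> 'a \<times> 'a" (infixl "\<cdot>" 70) where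
  "u \<cdot> v \<equiv> pre_mult p k s \<alpha> u v"

abbreviation smul :: "'a \<times> 'a \<Rightarrow> 'a \<times> 'a \<Rightarrow> 'a \<times> 'a" (infixl "\<star>" 70) where
  "u \<star> v \<equiv> star p k s \<alpha> u v"

abbreviation scalars :: "'a set" where
  "scalars \<equiv> {c. c ^ (p ^ k) = c \<and> c ^ (p ^ s) = c}"

lemma p_pos: "0 < p"
  using prime_p by (simp add: prime_gt_0_nat)

lemma zero_power_power [simp]: "(0::'a) ^ (p ^ j) = 0"
  using p_pos by simp

lemma two_nonzero: "(2::'a) \<noteq> 0"
proof
  assume "(2::'a) = 0"
  then have "CHAR('a) dvd 2"
    using of_nat_eq_0_iff_char_dvd[where 'a = 'a, of 2] by simp
  then have "p \<le> 2"
    using CHAR_eq_of_card_eq_prime_power[OF prime_p card_field] by (simp add: dvd_imp_le)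
  with prime_p odd_p show False
    using prime_ge_2_nat[of p] by simp
qed

lemma power_p_m_eq_self: "(x::'a) ^ (p ^ m) = x"
  using power_card_eq_self card_field by metis

lemma frobenius_diff: "(x - y :: 'a) ^ (p ^ j) = x ^ (p ^ j) - y ^ (p ^ j)"
  using freshmans_dream'[of "p ^ j" j "x - y" y] prime_p
    CHAR_eq_of_card_eq_prime_power[OF prime_p card_field] by simp

lemma power_eq_neg_imp_zero:
  assumes "(x::'a) ^ (p ^ k) = - x"
  shows "x = 0"
proof -
  have "x ^ (p ^ (2 * k)) = (x ^ (p ^ k)) ^ (p ^ k)"
    by (simp add: mult_2 power_add power_mult)
  also have "\<dots> = (- x) ^ (p ^ k)"
    by (simp only: assms)
  also have "\<dots> = - (x ^ (p ^ k))"
    using odd_p by (intro power_minus_odd) simp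
  also have "\<dots> = x"
    by (simp only: assms minus_minus)
  finally have "x ^ (p ^ gcd (2 * k) m) = x"
    using power_power_fixed_gcd[OF _ power_p_m_eq_self] by simp
  then have "x ^ (p ^ k) = x"
    unfolding gcd_double_eq_gcd[OF odd_m_div_gcd] by (rule power_power_fixed_dvd) simp
  with assms have "x + x = 0"
    by simp
  then have "2 * x = 0"
    by (simp only: mult_2)
  with two_nonzero show ?thesis
    by simp
qed

lemma bij_L: "bij L"
proof -
  have "inj L"
  proof (rule injI)
    fix u v :: "'a \<times> 'a"
    assume "L u = L v"
    then have "(fst u - fst v) ^ (p ^ k) = - (fst u - fst v)" and "snd u = snd v"
      by (simp_all add: Lmap_def frobenius_diff algebra_simps)
    then show "u = v"
      using power_eq_neg_imp_zero[of "fst u - fst v"] by (simp add: prod_eq_iff)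
  qed
  then show ?thesis
    by (simp add: bij_def finite_UNIV_inj_surj)
qed

lemma L_inv_L [simp]: "L_inv (L u) = u"
  using bij_L by (simp add: bij_is_inj)

lemma L_L_inv [simp]: "L (L_inv u) = u"
  using bij_L by (simp add: bij_is_surj surj_f_inv_f)

lemma snd_L_inv [simp]: "snd (L_inv u) = snd u"
  by (metis L_L_inv Lmap_def snd_conv)

lemma fst_L_inv: "fst (L_inv u) + fst (L_inv u) ^ (p ^ k) = fst u"
  by (metis L_L_inv Lmap_def fst_conv)

lemma L_inv_zero_fst [simp]: "L_inv (0, y) = (0, y)"
  by (metis Lmap_def fst_conv snd_conv add_0 zero_power_power L_inv_L)

lemma star_eq: "u \<star> v = L_inv u \<cdot> L_inv v"
  by (simp add: star_def)

lemma star_commute: "u \<star> v = v \<star> u"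
  by (simp add: star_eq pre_mult_commute)

lemma L_scalar: "c ^ (p ^ k) = c \<Longrightarrow> L (c, 0) = (2 * c, 0)"
  by (simp add: Lmap_def flip: mult_2)

lemma L_inv_scale_pair:
  assumes "c ^ (p ^ k) = c"
  shows "L_inv (scale_pair c u) = scale_pair c (L_inv u)"
proof -
  have "scale_pair c u = L (scale_pair c (L_inv u))"
    using Lmap_scale_pair[OF assms] by simp
  then show ?thesis
    by simp
qed

lemma star_scalar_left:
  assumes "c ^ (p ^ k) = c"
  shows "(2 * c, 0) \<star> v = scale_pair c v"
proof -
  have "L_inv (2 * c, 0) = (c, 0)"
    using L_scalar[OF assms] by (metis L_inv_L)
  then show ?thesis
    using assms by (simp add: star_eq pre_mult_scalar_left p_pos Lmap_scale_pair)
qed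

lemma star_scale_pair_left:
  assumes "c \<in> scalars"
  shows "scale_pair c u \<star> v = scale_pair c (u \<star> v)"
  using assms by (simp add: star_eq L_inv_scale_pair pre_mult_scale_pair_left)

lemma scalar_mem_left_nucleus:
  assumes "c \<in> scalars"
  shows "(2 * c, 0) \<in> left_nucleus (\<star>)"
  using assms by (simp add: left_nucleus_def star_scalar_left star_scale_pair_left)

lemma scalar_mem_middle_nucleus:
  assumes c: "c \<in> scalars"
  shows "(2 * c, 0) \<in> middle_nucleus (\<star>)"
proof -
  have "(x \<star> (2 * c, 0)) \<star> y = x \<star> ((2 * c, 0) \<star> y)" for x y
  proof -
    have "(x \<star> (2 * c, 0)) \<star> y = scale_pair c x \<star> y"
      using c by (subst star_commute) (simp add: star_scalar_left)
    also have "\<dots> = scale_pair c (x \<star> y)"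
      using c by (rule star_scale_pair_left)
    also have "\<dots> = scale_pair c (y \<star> x)"
      by (simp only: star_commute[of x y])
    also have "\<dots> = scale_pair c y \<star> x"
      using c by (rule star_scale_pair_left[symmetric])
    also have "\<dots> = x \<star> ((2 * c, 0) \<star> y)"
      using c by (subst star_commute) (simp add: star_scalar_left)
    finally show ?thesis .
  qed
  then show ?thesis
    by (simp add: middle_nucleus_def)
qed

lemma exists_not_fixed: "\<exists>z::'a. z ^ (p ^ k) \<noteq> z"
proof (rule exists_power_neq_self)
  have "1 < p"
    using prime_p by (rule prime_gt_1_nat)
  then show "1 < p ^ k"
    using k_pos by (rule one_less_power)
  show "p ^ k < card (UNIV :: 'a set)"
    using \<open>1 < p\<close> k_less card_field by (simp add: power_strict_increasing)
qed

text \<open>Left-nuclearity of \<open>L A\<close>, read off on pre-images under \<open>L\<close>.\<close>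
definition pre_left_nuclear :: "'a \<times> 'a \<Rightarrow> bool" where
  "pre_left_nuclear A \<longleftrightarrow> (\<forall>X Y. L_inv (A \<cdot> X) \<cdot> Y = A \<cdot> L_inv (X \<cdot> Y))"

lemma left_nucleus_imp_pre_left_nuclear:
  assumes "a \<in> left_nucleus (\<star>)"
  shows "pre_left_nuclear (L_inv a)"
  unfolding pre_left_nuclear_def
proof (intro allI)
  fix X Y
  have "(a \<star> L X) \<star> L Y = a \<star> (L X \<star> L Y)"
    using assms unfolding left_nucleus_def by blast
  then show "L_inv (L_inv a \<cdot> X) \<cdot> Y = L_inv a \<cdot> L_inv (X \<cdot> Y)"
    by (simp add: star_eq)
qed

lemma pre_left_nuclear_fst_fixed:
  assumes "pre_left_nuclear (a\<^sub>1, a\<^sub>2)"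
  shows "a\<^sub>1 ^ (p ^ k) = a\<^sub>1"
proof -
  obtain z :: 'a where z: "z ^ (p ^ k) \<noteq> z"
    using exists_not_fixed by blast
  define U where "U = L_inv ((a\<^sub>1, a\<^sub>2) \<cdot> (z, 0))"
  have LU: "L U = (circ p k a\<^sub>1 z, a\<^sub>2 * z)"
    by (simp add: U_def pre_mult_def circ_def)
  have "U \<cdot> (0, 1) = (a\<^sub>1, a\<^sub>2) \<cdot> L_inv ((z, 0) \<cdot> (0, 1))"
    using assms by (simp add: U_def pre_left_nuclear_def)
  also have "(z, 0) \<cdot> (0, 1) = (0, z)"
    by (simp add: pre_mult_def circ_def)
  finally have "fst U = a\<^sub>1 * z"
    by (simp add: pre_mult_def)
  with LU have "a\<^sub>1 * z + (a\<^sub>1 * z) ^ (p ^ k) = a\<^sub>1 ^ (p ^ k) * z + z ^ (p ^ k) * a\<^sub>1"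
    by (simp add: Lmap_def circ_def)
  then have "(a\<^sub>1 - a\<^sub>1 ^ (p ^ k)) * (z - z ^ (p ^ k)) = 0"
    by (simp add: power_mult_distrib algebra_simps)
  with z show ?thesis
    by simp
qed

lemma pre_left_nuclear_snd_zero:
  assumes "pre_left_nuclear (a\<^sub>1, a\<^sub>2)"
  shows "a\<^sub>2 = 0"
proof (rule ccontr)
  assume "a\<^sub>2 \<noteq> 0"
  obtain z :: 'a where z: "z ^ (p ^ k) \<noteq> z"
    using exists_not_fixed by blast
  define W where "W = L_inv ((z, 0) \<cdot> (z, 0))"
  have "L_inv ((a\<^sub>1, a\<^sub>2) \<cdot> (z, 0)) \<cdot> (z, 0) = (a\<^sub>1, a\<^sub>2) \<cdot> W"
    using assms by (simp add: W_def pre_left_nuclear_def)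
  then have "a\<^sub>2 * z * z = a\<^sub>2 * fst W"
    by (simp add: W_def pre_mult_def)
  with \<open>a\<^sub>2 \<noteq> 0\<close> have "fst W = z * z"
    by simp
  moreover have "fst W + fst W ^ (p ^ k) = circ p k z z"
    using fst_L_inv[of "(z, 0) \<cdot> (z, 0)"] by (simp add: W_def pre_mult_def circ_def)
  ultimately have "(z - z ^ (p ^ k)) * (z - z ^ (p ^ k)) = 0"
    by (simp add: circ_def power_mult_distrib algebra_simps)
  with z show False
    by simp
qed

lemma pre_left_nuclear_fst_fixed_s:
  assumes nuclear: "pre_left_nuclear (a\<^sub>1, 0)" and fixed: "a\<^sub>1 ^ (p ^ k) = a\<^sub>1"
  shows "a\<^sub>1 ^ (p ^ s) = a\<^sub>1"
proof -
  define w where "w = \<alpha> * 2 ^ (p ^ s)"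
  have "(w * a\<^sub>1 ^ (p ^ s), 0) = L_inv ((a\<^sub>1, 0) \<cdot> (0, 1)) \<cdot> (0, 1)"
    using fixed by (simp add: w_def pre_mult_def circ_def power_mult_distrib flip: mult_2)
  also have "\<dots> = (a\<^sub>1, 0) \<cdot> L_inv ((0, 1) \<cdot> (0, 1))"
    using nuclear by (simp add: pre_left_nuclear_def)
  also have "(0, 1) \<cdot> (0, 1) = (w, 0)"
    by (simp add: w_def pre_mult_def circ_def one_add_one)
  also have "(a\<^sub>1, 0) \<cdot> L_inv (w, 0) = L (scale_pair a\<^sub>1 (L_inv (w, 0)))"
    by (rule pre_mult_scalar_left[OF fixed p_pos])
  also have "\<dots> = (w * a\<^sub>1, 0)"
    unfolding Lmap_scale_pair[OF fixed] by (simp add: scale_pair_def mult.commute)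
  finally have "w * a\<^sub>1 ^ (p ^ s) = w * a\<^sub>1"
    by simp
  moreover have "w \<noteq> 0"
    using alpha_nonzero two_nonzero by (simp add: w_def)
  ultimately show ?thesis
    by simp
qed

lemma left_nucleus_subset_scalars:
  assumes "a \<in> left_nucleus (\<star>)"
  shows "a \<in> (\<lambda>c. (2 * c, 0)) ` scalars"
proof -
  obtain a\<^sub>1 a\<^sub>2 where A: "L_inv a = (a\<^sub>1, a\<^sub>2)"
    by fastforce
  have nuclear: "pre_left_nuclear (a\<^sub>1, a\<^sub>2)"
    using left_nucleus_imp_pre_left_nuclear[OF assms] A by simp
  have fixed_k: "a\<^sub>1 ^ (p ^ k) = a\<^sub>1"
    using pre_left_nuclear_fst_fixed[OF nuclear] .
  have "a\<^sub>2 = 0"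
    using pre_left_nuclear_snd_zero[OF nuclear] .
  with nuclear fixed_k have "a\<^sub>1 \<in> scalars"
    using pre_left_nuclear_fst_fixed_s by simp
  moreover have "a = (2 * a\<^sub>1, 0)"
    using L_L_inv[of a] A \<open>a\<^sub>2 = 0\<close> L_scalar[OF fixed_k] by simp
  ultimately show ?thesis
    by blast
qed

lemma nuclei_eq_scalars:
  shows left_nucleus_eq_scalars: "left_nucleus (\<star>) = (\<lambda>c. (2 * c, 0)) ` scalars"
    and right_nucleus_eq_scalars: "right_nucleus (\<star>) = (\<lambda>c. (2 * c, 0)) ` scalars"
    and nucleus_eq_scalars: "nucleus (\<star>) = (\<lambda>c. (2 * c, 0)) ` scalars"
proof -
  show left: "left_nucleus (\<star>) = (\<lambda>c. (2 * c, 0)) ` scalars"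
    using left_nucleus_subset_scalars scalar_mem_left_nucleus by blast
  show right: "right_nucleus (\<star>) = (\<lambda>c. (2 * c, 0)) ` scalars"
    using left right_nucleus_eq_left_nucleus[OF star_commute] by simp
  show "nucleus (\<star>) = (\<lambda>c. (2 * c, 0)) ` scalars"
    using left right scalar_mem_middle_nucleus by (auto simp: nucleus_def)
qed

lemma nucleus_iso_scalars:
  "\<exists>f. bij_betw f (nucleus (\<star>)) scalars
     \<and> (\<forall>a\<in>nucleus (\<star>). \<forall>b\<in>nucleus (\<star>). f (pair_add a b) = f a + f b \<and> f (a \<star> b) = f a * f b)"
proof (intro exI conjI ballI)
  let ?f = "\<lambda>u::'a \<times> 'a. fst u / 2"
  show "bij_betw ?f (nucleus (\<star>)) scalars"
    unfolding nucleus_eq_scalars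
    by (rule bij_betw_byWitness[where f' = "\<lambda>c. (2 * c, 0)"]) (use two_nonzero in auto)
  fix a b
  assume "a \<in> nucleus (\<star>)" and "b \<in> nucleus (\<star>)"
  then obtain c d where a: "a = (2 * c, 0)" and b: "b = (2 * d, 0)" and "c \<in> scalars"
    unfolding nucleus_eq_scalars by blast
  then have "a \<star> b = (2 * (c * d), 0)"
    using star_scalar_left[of c b] by (simp add: scale_pair_def mult.left_commute)
  with a b two_nonzero show "?f (pair_add a b) = ?f a + ?f b" and "?f (a \<star> b) = ?f a * ?f b"
    by (simp_all add: pair_add_def algebra_simps)
qed

end

theorem theorem3:
  fixes p m k s :: nat and \<alpha> :: "'a::{field,finite}"
  assumes "prime p" and "odd p"
    and "card (UNIV :: 'a set) = p ^ m"
    and "0 < k" and "k \<le> m div 2"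
    and "odd (m div gcd m k)"
    and "\<alpha> ^ (p ^ gcd m k) = \<alpha>"
    and "\<not> (\<exists>y. y ^ 2 = \<alpha>)"
    and "s \<le> m div 2"
  shows "left_nucleus (star p k s \<alpha>) = nucleus (star p k s \<alpha>)
       \<and> right_nucleus (star p k s \<alpha>) = nucleus (star p k s \<alpha>)
       \<and> (\<exists>f. bij_betw f (nucleus (star p k s \<alpha>)) {x::'a. x ^ (p ^ gcd (gcd m k) s) = x}
              \<and> (\<forall>a\<in>nucleus (star p k s \<alpha>). \<forall>b\<in>nucleus (star p k s \<alpha>).
                    f (pair_add a b) = f a + f b
                  \<and> f (star p k s \<alpha> a b) = f a * f b))"
proof -
  interpret pair_semifield p m k s \<alpha>
  proof
    show "k < m"
      using assms(4,5) by linarith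
    show "\<alpha> \<noteq> 0"
      using assms(8) by (metis power_zero_numeral)
  qed (use assms in auto)
  have "scalars = {x. x ^ (p ^ gcd (gcd m k) s) = x}"
    using power_power_fixed_both_iff_gcd[OF power_p_m_eq_self] by blast
  with nuclei_eq_scalars nucleus_iso_scalars show ?thesis
    by simp
qed

end
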